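(* Let $P=\{x\in\mathbb{R}^n: Ax\ge b\}$ with rational data be full-dimensional and pointed, let $\mathcal{I}\subseteq\{1,\dots,n\}$ and $P_I=\{x\in P: x_j\in\mathbb{Z}\text{ for all } j\in\mathcal{I}\}$. Let $\mathcal{P},\mathcal{R}\subset\mathbb{R}^n$ be finite sets of points and rays. Then the point-ray collection $(\mathcal{P},\mathcal{R})$ is proper if and only if $P_I\subseteq \operatorname{conv}(\mathcal{P})+\operatorname{cone}(\mathcal{R})$.
   Context: The point-ray linear program (PRLP) for $(\mathcal{P},\mathcal{R})$ has feasible region $\{(\alpha,\beta)\in\mathbb{R}^n\times\mathbb{R}: \alpha^\top p\ge\beta\ \forall p\in\mathcal{P},\ \alpha^\top r\ge 0\ \forall r\in\mathcal{R}\}$. The collection $(\mathcal{P},\mathcal{R})$ is called proper if $\alpha^\top x\ge\beta$ is a valid inequality for $P_I$ whenever $(\alpha,\beta)$ is feasible for the PRLP. *)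

theory Defs
  imports "HOL-Analysis.Analysis"
begin

definition ineq_polyhedron :: "real^'n^'m \<Rightarrow> real^'m \<Rightarrow> (real^'n) set" where
  "ineq_polyhedron A b = {x. \<forall>i. (A *v x) $ i \<ge> b $ i}"

definition mixed_int_set :: "real^'n^'m \<Rightarrow> real^'m \<Rightarrow> 'n set \<Rightarrow> (real^'n) set" where
  "mixed_int_set A b I = {x \<in> ineq_polyhedron A b. \<forall>j\<in>I. x $ j \<in> \<int>}"

definition full_dimensional :: "(real^'n) set \<Rightarrow> bool" where
  "full_dimensional S \<longleftrightarrow> aff_dim S = int CARD('n)"

definition pointed :: "(real^'n) set \<Rightarrow> bool" where
  "pointed S \<longleftrightarrow> \<not> (\<exists>x d. d \<noteq> 0 \<and> (\<forall>t::real. x + t *\<^sub>R d \<in> S))"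

definition prlp_feasible :: "(real^'n) set \<Rightarrow> (real^'n) set \<Rightarrow> real^'n \<Rightarrow> real \<Rightarrow> bool" where
  "prlp_feasible Ps Rs \<alpha> \<beta> \<longleftrightarrow> (\<forall>p\<in>Ps. \<alpha> \<bullet> p \<ge> \<beta>) \<and> (\<forall>r\<in>Rs. \<alpha> \<bullet> r \<ge> 0)"

definition valid_ineq :: "(real^'n) set \<Rightarrow> real^'n \<Rightarrow> real \<Rightarrow> bool" where
  "valid_ineq S \<alpha> \<beta> \<longleftrightarrow> (\<forall>x\<in>S. \<alpha> \<bullet> x \<ge> \<beta>)"

definition proper_collection :: "(real^'n) set \<Rightarrow> (real^'n) set \<Rightarrow> (real^'n) set \<Rightarrow> bool" where
  "proper_collection PI Ps Rs \<longleftrightarrow> (\<forall>\<alpha> \<beta>. prlp_feasible Ps Rs \<alpha> \<beta> \<longrightarrow> valid_ineq PI \<alpha> \<beta>)"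

text \<open>conv(Ps) + cone(Rs); cone(Rs) is the convex conic hull (cone of empty set = {0}).\<close>
definition conv_plus_cone :: "(real^'n) set \<Rightarrow> (real^'n) set \<Rightarrow> (real^'n) set" where
  "conv_plus_cone Ps Rs = {p + r | p r. p \<in> convex hull Ps \<and> r \<in> convex_cone hull Rs}"

end

theory Submission
  imports Defs
begin

text \<open>For finite \<open>\<P>\<close> and \<open>\<R>\<close> the set \<open>Q = conv(\<P>) + cone(\<R>)\<close> is closed and convex, so by
  the separating hyperplane theorem a set lies in \<open>Q\<close> iff it satisfies every inequality valid
  for \<open>Q\<close>. When \<open>\<P> \<noteq> {}\<close>, the inequalities valid for \<open>Q\<close> are exactly the PRLP-feasible
  \<open>(\<alpha>, \<beta>)\<close>: points of \<open>\<P>\<close> and \<open>\<R>\<close>-directions from them lie in \<open>Q\<close>. When \<open>\<P> = {}\<close>, the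
  infeasible inequality \<open>0 \<ge> 1\<close> is PRLP-feasible, so both sides say that the set is empty.\<close>

lemma conv_plus_cone_eq_sums:
  "conv_plus_cone Ps Rs = (\<Union>p\<in>convex hull Ps. \<Union>r\<in>convex_cone hull Rs. {p + r})"
  unfolding conv_plus_cone_def by blast

lemma closed_conv_plus_cone:
  assumes "finite Ps" and "finite Rs"
  shows "closed (conv_plus_cone Ps Rs)"
  unfolding conv_plus_cone_eq_sums
  by (intro compact_closed_sums compact_convex_hull closed_convex_cone_hull finite_imp_compact assms)

lemma convex_conv_plus_cone: "convex (conv_plus_cone Ps Rs)"
  unfolding conv_plus_cone_eq_sums
  by (intro convex_sums convex_convex_hull convex_convex_cone_hull)

lemma conv_plus_cone_empty_points [simp]: "conv_plus_cone {} Rs = {}"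
  by (simp add: conv_plus_cone_def)

lemma add_ray_mem_conv_plus_cone:
  assumes "p \<in> Ps" and "r \<in> Rs" and "0 \<le> t"
  shows "p + t *\<^sub>R r \<in> conv_plus_cone Ps Rs"
  unfolding conv_plus_cone_def
  using assms by (blast intro: hull_inc convex_cone_hull_mul)

lemma point_mem_conv_plus_cone:
  assumes "p \<in> Ps"
  shows "p \<in> conv_plus_cone Ps Rs"
  unfolding conv_plus_cone_def
  using hull_inc[OF assms] convex_cone_hull_contains_0[of Rs] by force

lemma valid_ineq_conv_plus_cone:
  assumes "prlp_feasible Ps Rs \<alpha> \<beta>"
  shows "valid_ineq (conv_plus_cone Ps Rs) \<alpha> \<beta>"
  unfolding valid_ineq_def
proof
  fix x assume "x \<in> conv_plus_cone Ps Rs"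
  then obtain p r where x: "x = p + r" and p: "p \<in> convex hull Ps" and r: "r \<in> convex_cone hull Rs"
    unfolding conv_plus_cone_def by blast
  have "convex hull Ps \<subseteq> {y. \<beta> \<le> \<alpha> \<bullet> y}"
    using assms by (intro hull_minimal) (auto simp: prlp_feasible_def convex_halfspace_ge)
  moreover have "convex_cone hull Rs \<subseteq> {y. 0 \<le> \<alpha> \<bullet> y}"
    using assms by (intro hull_minimal) (auto simp: prlp_feasible_def convex_cone_halfspace_ge)
  ultimately show "\<beta> \<le> \<alpha> \<bullet> x"
    using x p r by (fastforce simp: inner_add_right)
qed

lemma prlp_feasible_if_valid_ineq_conv_plus_cone:
  assumes "Ps \<noteq> {}" and valid: "valid_ineq (conv_plus_cone Ps Rs) \<alpha> \<beta>"
  shows "prlp_feasible Ps Rs \<alpha> \<beta>"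
  unfolding prlp_feasible_def
proof
  show points: "\<forall>p\<in>Ps. \<beta> \<le> \<alpha> \<bullet> p"
    using valid point_mem_conv_plus_cone by (fastforce simp: valid_ineq_def)
  show "\<forall>r\<in>Rs. 0 \<le> \<alpha> \<bullet> r"
  proof (rule ballI, rule ccontr)
    fix r assume r: "r \<in> Rs" and "\<not> 0 \<le> \<alpha> \<bullet> r"
    then have neg: "\<alpha> \<bullet> r < 0" by simp
    obtain p where p: "p \<in> Ps" using assms(1) by blast
    \<comment> \<open>walking from \<open>p\<close> along \<open>r\<close> until \<open>\<alpha> \<bullet> x = \<beta> - 1\<close> leaves the half-space\<close>
    define t where "t = (\<alpha> \<bullet> p - \<beta> + 1) / - (\<alpha> \<bullet> r)"
    have "0 \<le> t"
      unfolding t_def using points p neg by (intro divide_nonneg_pos) auto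
    then have "\<beta> \<le> \<alpha> \<bullet> (p + t *\<^sub>R r)"
      using valid add_ray_mem_conv_plus_cone[OF p r] by (simp add: valid_ineq_def)
    moreover have "\<alpha> \<bullet> (p + t *\<^sub>R r) = \<beta> - 1"
      unfolding t_def using neg by (simp add: inner_add_right inner_diff_right field_simps)
    ultimately show False by simp
  qed
qed

lemma prlp_feasible_iff_valid_ineq_conv_plus_cone:
  "Ps \<noteq> {} \<Longrightarrow> prlp_feasible Ps Rs \<alpha> \<beta> \<longleftrightarrow> valid_ineq (conv_plus_cone Ps Rs) \<alpha> \<beta>"
  using valid_ineq_conv_plus_cone prlp_feasible_if_valid_ineq_conv_plus_cone by blast

lemma subset_closed_convex_iff_valid_ineqs:
  fixes S Q :: "(real^'n) set"
  assumes "closed Q" and "convex Q"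
  shows "S \<subseteq> Q \<longleftrightarrow> (\<forall>\<alpha> \<beta>. valid_ineq Q \<alpha> \<beta> \<longrightarrow> valid_ineq S \<alpha> \<beta>)"
proof
  show "S \<subseteq> Q \<Longrightarrow> \<forall>\<alpha> \<beta>. valid_ineq Q \<alpha> \<beta> \<longrightarrow> valid_ineq S \<alpha> \<beta>"
    by (auto simp: valid_ineq_def)
next
  assume inherits: "\<forall>\<alpha> \<beta>. valid_ineq Q \<alpha> \<beta> \<longrightarrow> valid_ineq S \<alpha> \<beta>"
  show "S \<subseteq> Q"
  proof
    fix x assume x: "x \<in> S"
    show "x \<in> Q"
    proof (rule ccontr)
      assume "x \<notin> Q"
      then obtain \<alpha> \<beta> where "\<alpha> \<bullet> x < \<beta>" and "\<forall>q\<in>Q. \<beta> < \<alpha> \<bullet> q"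
        using separating_hyperplane_closed_point[OF assms(2,1)] by blast
      then have "valid_ineq Q \<alpha> \<beta>" and "\<not> valid_ineq S \<alpha> \<beta>"
        using x by (force simp: valid_ineq_def)+
      then show False
        using inherits by blast
    qed
  qed
qed

lemma proper_collection_iff_subset_conv_plus_cone:
  assumes "finite Ps" and "finite Rs"
  shows "proper_collection S Ps Rs \<longleftrightarrow> S \<subseteq> conv_plus_cone Ps Rs"
proof (cases "Ps = {}")
  case True
  have "prlp_feasible Ps Rs 0 1"
    using True by (simp add: prlp_feasible_def)
  then have "proper_collection S Ps Rs \<Longrightarrow> S = {}"
    by (fastforce simp: proper_collection_def valid_ineq_def)
  moreover have "proper_collection {} Ps Rs"
    by (simp add: proper_collection_def valid_ineq_def)
  ultimately show ?thesis
    using True by auto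
next
  case False
  then show ?thesis
    unfolding proper_collection_def prlp_feasible_iff_valid_ineq_conv_plus_cone[OF False]
    by (intro subset_closed_convex_iff_valid_ineqs[symmetric]
        closed_conv_plus_cone convex_conv_plus_cone assms)
qed

theorem corollary1:
  fixes A :: "real^'n^'m" and b :: "real^'m" and I :: "'n set"
    and Ps Rs :: "(real^'n) set"
  assumes "\<forall>i j. A $ i $ j \<in> \<rat>" and "\<forall>i. b $ i \<in> \<rat>"
    and "full_dimensional (ineq_polyhedron A b)" and "pointed (ineq_polyhedron A b)"
    and "finite Ps" and "finite Rs"
  shows "proper_collection (mixed_int_set A b I) Ps Rs \<longleftrightarrow>
         mixed_int_set A b I \<subseteq> conv_plus_cone Ps Rs"
  using proper_collection_iff_subset_conv_plus_cone[OF assms(5,6)] .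

end
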